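(* Let $0<\alpha<\infty$, $0<\beta<\infty$, $u\in H(\mathbb{D})$, $\varphi\in S(\mathbb{D})$, and suppose $uC_\varphi$ is a bounded operator from $\mathcal{B}^\alpha$ into $\mathcal{Z}_\beta$. Then $$\|uC_\varphi\|_{e,\tilde{\mathcal{B}}^\alpha\to\mathcal{Z}_\beta}=\|uC_\varphi\|_{e,\mathcal{B}^\alpha\to\mathcal{Z}_\beta}.$$
   Context: $\mathbb{D}$ is the open unit disk, $H(\mathbb{D})$ the holomorphic functions on $\mathbb{D}$, $S(\mathbb{D})$ the holomorphic self-maps of $\mathbb{D}$; $uC_\varphi f(z)=u(z)f(\varphi(z))$. $\mathcal{B}^\alpha$ is the space of $f\in H(\mathbb{D})$ with $\sup_z(1-|z|^2)^\alpha|f'(z)|<\infty$, normed by $|f(0)|+\sup_z(1-|z|^2)^\alpha|f'(z)|$; $\tilde{\mathcal{B}}^\alpha=\{f\in\mathcal{B}^\alpha: f(0)=0\}$ with the same norm. $\mathcal{Z}_\beta$ is the space of $f\in H(\mathbb{D})$ with $\sup_z(1-|z|^2)^\beta|f''(z)|<\infty$, normed by $|f(0)|+|f'(0)|+\sup_z(1-|z|^2)^\beta|f''(z)|$. For a bounded operator $T:X\to Y$ between Banach spaces, the essential norm is $\|T\|_{e,X\to Y}=\inf\{\|T-K\|: K:X\to Y \text{ compact}\}$; here $\|uC_\varphi\|_{e,\tilde{\mathcal{B}}^\alpha\to\mathcal{Z}_\beta}$ refers to the restriction of $uC_\varphi$ to $\tilde{\mathcal{B}}^\alpha$. *)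

theory Defs
  imports "HOL-Complex_Analysis.Complex_Analysis"
begin

type_synonym cfun = "complex \<Rightarrow> complex"

definition disk :: "complex set" where "disk = ball 0 1"

definition bloch_space :: "real \<Rightarrow> cfun set" where
  "bloch_space a = {f. f holomorphic_on disk \<and>
     bdd_above ((\<lambda>z. (1 - (cmod z)^2) powr a * cmod (deriv f z)) ` disk)}"

definition bloch_norm :: "real \<Rightarrow> cfun \<Rightarrow> real" where
  "bloch_norm a f = cmod (f 0) +
     (SUP z\<in>disk. (1 - (cmod z)^2) powr a * cmod (deriv f z))"

definition bloch0_space :: "real \<Rightarrow> cfun set" where
  "bloch0_space a = {f \<in> bloch_space a. f 0 = 0}"

definition zyg_space :: "real \<Rightarrow> cfun set" where
  "zyg_space b = {f. f holomorphic_on disk \<and>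
     bdd_above ((\<lambda>z. (1 - (cmod z)^2) powr b * cmod (deriv (deriv f) z)) ` disk)}"

definition zyg_norm :: "real \<Rightarrow> cfun \<Rightarrow> real" where
  "zyg_norm b f = cmod (f 0) + cmod (deriv f 0) +
     (SUP z\<in>disk. (1 - (cmod z)^2) powr b * cmod (deriv (deriv f) z))"

definition wcomp :: "cfun \<Rightarrow> cfun \<Rightarrow> cfun \<Rightarrow> cfun" where
  "wcomp u \<phi> f = (\<lambda>z. u z * f (\<phi> z))"

definition linear_on :: "cfun set \<Rightarrow> (cfun \<Rightarrow> cfun) \<Rightarrow> bool" where
  "linear_on X T \<longleftrightarrow> (\<forall>f\<in>X. \<forall>g\<in>X. T (\<lambda>z. f z + g z) = (\<lambda>z. T f z + T g z)) \<and>
                      (\<forall>c. \<forall>f\<in>X. T (\<lambda>z. c * f z) = (\<lambda>z. c * T f z))"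

definition bounded_op :: "cfun set \<Rightarrow> (cfun \<Rightarrow> real) \<Rightarrow> cfun set \<Rightarrow> (cfun \<Rightarrow> real)
    \<Rightarrow> (cfun \<Rightarrow> cfun) \<Rightarrow> bool" where
  "bounded_op X nX Y nY T \<longleftrightarrow> linear_on X T \<and> (\<forall>f\<in>X. T f \<in> Y) \<and>
      (\<exists>C. \<forall>f\<in>X. nY (T f) \<le> C * nX f)"

definition op_norm :: "cfun set \<Rightarrow> (cfun \<Rightarrow> real) \<Rightarrow> (cfun \<Rightarrow> real)
    \<Rightarrow> (cfun \<Rightarrow> cfun) \<Rightarrow> real" where
  "op_norm X nX nY T = Sup {nY (T f) | f. f \<in> X \<and> nX f \<le> 1}"

definition compact_op :: "cfun set \<Rightarrow> (cfun \<Rightarrow> real) \<Rightarrow> cfun set \<Rightarrow> (cfun \<Rightarrow> real)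
    \<Rightarrow> (cfun \<Rightarrow> cfun) \<Rightarrow> bool" where
  "compact_op X nX Y nY K \<longleftrightarrow> linear_on X K \<and> (\<forall>f\<in>X. K f \<in> Y) \<and>
     (\<forall>s::nat \<Rightarrow> cfun. (\<forall>n. s n \<in> X) \<longrightarrow> bdd_above (range (\<lambda>n. nX (s n))) \<longrightarrow>
        (\<exists>r g. strict_mono r \<and> g \<in> Y \<and>
               (\<lambda>n. nY (\<lambda>z. K (s (r n)) z - g z)) \<longlonglongrightarrow> 0))"

definition ess_norm :: "cfun set \<Rightarrow> (cfun \<Rightarrow> real) \<Rightarrow> cfun set \<Rightarrow> (cfun \<Rightarrow> real)
    \<Rightarrow> (cfun \<Rightarrow> cfun) \<Rightarrow> real" where
  "ess_norm X nX Y nY T =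
     Inf {op_norm X nX nY (\<lambda>f z. T f z - K f z) | K. compact_op X nX Y nY K}"

end

theory Submission imports Defs begin

text \<open>
  Restricting a compact operator \<open>K\<close> on \<open>\<B>\<^sup>\<alpha>\<close> to the subspace of functions vanishing at
  \<open>0\<close> cannot increase \<open>\<parallel>T - K\<parallel>\<close>. Conversely, a compact \<open>K\<^sub>0\<close> on that subspace extends to the
  compact operator \<open>K f = K\<^sub>0 (f - f(0)) + f(0) T1\<close> on all of \<open>\<B>\<^sup>\<alpha>\<close> (a compact operator plus a
  rank-one one), and then \<open>(T - K) f = (T - K\<^sub>0) (f - f(0))\<close> with
  \<open>\<parallel>f - f(0)\<parallel> \<le> \<parallel>f\<parallel>\<close>, so \<open>\<parallel>T - K\<parallel> \<le> \<parallel>T - K\<^sub>0\<parallel>\<close>. Taking infima gives equality of the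
  essential norms for every bounded operator \<open>T\<close>; only this is used of \<open>uC\<^sub>\<phi>\<close>.
\<close>

lemma open_disk: "open disk" and zero_in_disk: "0 \<in> disk"
  by (auto simp: disk_def)

lemma linear_on_zero:
  assumes "linear_on X T" and "(\<lambda>z. 0) \<in> X"
  shows "T (\<lambda>z. 0) = (\<lambda>z. 0)"
  using assms(1)[unfolded linear_on_def, THEN conjunct2, rule_format, OF assms(2), of 0] by simp

lemma zyg_space_lincomb:
  assumes f: "f \<in> zyg_space b" and g: "g \<in> zyg_space b"
  shows "(\<lambda>z. a*f z + c*g z) \<in> zyg_space b \<and>
         zyg_norm b (\<lambda>z. a*f z + c*g z) \<le> cmod a * zyg_norm b f + cmod c * zyg_norm b g"
proof -
  have hf: "f holomorphic_on disk"
    and bf: "bdd_above ((\<lambda>z. (1 - (cmod z)^2) powr b * cmod (deriv (deriv f) z)) ` disk)"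
    using f by (auto simp: zyg_space_def)
  have hg: "g holomorphic_on disk"
    and bg: "bdd_above ((\<lambda>z. (1 - (cmod z)^2) powr b * cmod (deriv (deriv g) z)) ` disk)"
    using g by (auto simp: zyg_space_def)
  let ?h = "\<lambda>z. a*f z + c*g z"
  have "?h holomorphic_on disk" using hf hg by (intro holomorphic_intros)
  have higher_deriv_h: "(deriv ^^ n) ?h z = a * (deriv ^^ n) f z + c * (deriv ^^ n) g z"
    if "z \<in> disk" for n z
  proof -
    have "(deriv ^^ n) ?h z = (deriv ^^ n) (\<lambda>z. a*f z) z + (deriv ^^ n) (\<lambda>z. c*g z) z"
      by (rule higher_deriv_add) (use hf hg that open_disk in \<open>auto intro: holomorphic_intros\<close>)
    also have "\<dots> = a * (deriv ^^ n) f z + c * (deriv ^^ n) g z"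
      using higher_deriv_cmult[OF hf that open_disk] higher_deriv_cmult[OF hg that open_disk] by simp
    finally show ?thesis .
  qed
  have deriv_h: "deriv ?h 0 = a * deriv f 0 + c * deriv g 0"
    using higher_deriv_h[OF zero_in_disk, of 1] by simp
  have deriv2_h: "deriv (deriv ?h) z = a * deriv (deriv f) z + c * deriv (deriv g) z"
    if "z \<in> disk" for z
    using higher_deriv_h[OF that, of 2] by (simp add: numeral_2_eq_2)
  define Sf where "Sf = (SUP z\<in>disk. (1 - (cmod z)^2) powr b * cmod (deriv (deriv f) z))"
  define Sg where "Sg = (SUP z\<in>disk. (1 - (cmod z)^2) powr b * cmod (deriv (deriv g) z))"
  have weighted_le: "(1 - (cmod z)^2) powr b * cmod (deriv (deriv ?h) z) \<le> cmod a * Sf + cmod c * Sg"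
    if z: "z \<in> disk" for z
  proof -
    have "(1 - (cmod z)^2) powr b * cmod (deriv (deriv ?h) z)
       \<le> (1 - (cmod z)^2) powr b * (cmod a * cmod (deriv (deriv f) z) + cmod c * cmod (deriv (deriv g) z))"
      unfolding deriv2_h[OF z]
      by (intro mult_left_mono) (auto intro: order_trans[OF norm_triangle_ineq] simp: norm_mult)
    also have "\<dots> = cmod a * ((1 - (cmod z)^2) powr b * cmod (deriv (deriv f) z))
                  + cmod c * ((1 - (cmod z)^2) powr b * cmod (deriv (deriv g) z))"
      by (simp add: algebra_simps)
    also have "\<dots> \<le> cmod a * Sf + cmod c * Sg"
      unfolding Sf_def Sg_def by (intro add_mono mult_left_mono cSUP_upper bf bg z) auto
    finally show ?thesis .
  qed
  then have "bdd_above ((\<lambda>z. (1 - (cmod z)^2) powr b * cmod (deriv (deriv ?h) z)) ` disk)"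
    by (intro bdd_aboveI2)
  with \<open>?h holomorphic_on disk\<close> have "?h \<in> zyg_space b"
    by (simp add: zyg_space_def)
  moreover have "(SUP z\<in>disk. (1 - (cmod z)^2) powr b * cmod (deriv (deriv ?h) z)) \<le> cmod a * Sf + cmod c * Sg"
    using weighted_le zero_in_disk by (intro cSUP_least) auto
  moreover have "cmod (?h 0) \<le> cmod a * cmod (f 0) + cmod c * cmod (g 0)"
    and "cmod (deriv ?h 0) \<le> cmod a * cmod (deriv f 0) + cmod c * cmod (deriv g 0)"
    unfolding deriv_h by (auto intro: order_trans[OF norm_triangle_ineq] simp: norm_mult)
  ultimately show ?thesis
    unfolding zyg_norm_def Sf_def[symmetric] Sg_def[symmetric] by (simp add: algebra_simps)
qed

lemma zyg_space_zero: "(\<lambda>z. 0) \<in> zyg_space b"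
  and zyg_norm_zero: "zyg_norm b (\<lambda>z. 0) = 0"
  using zero_in_disk by (auto simp: zyg_norm_def zyg_space_def intro!: cSUP_const)

lemma zyg_norm_nonneg:
  assumes "f \<in> zyg_space b"
  shows "0 \<le> zyg_norm b f"
proof -
  have "0 \<le> (1 - (cmod 0)^2) powr b * cmod (deriv (deriv f) 0)" by simp
  also have "\<dots> \<le> (SUP z\<in>disk. (1 - (cmod z)^2) powr b * cmod (deriv (deriv f) z))"
    using assms zero_in_disk by (intro cSUP_upper) (auto simp: zyg_space_def)
  finally show ?thesis unfolding zyg_norm_def by simp
qed

lemma zyg_space_diff: "f \<in> zyg_space b \<Longrightarrow> g \<in> zyg_space b \<Longrightarrow> (\<lambda>z. f z - g z) \<in> zyg_space b"
  and zyg_norm_diff_le: "f \<in> zyg_space b \<Longrightarrow> g \<in> zyg_space b \<Longrightarrow>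
     zyg_norm b (\<lambda>z. f z - g z) \<le> zyg_norm b f + zyg_norm b g"
  using zyg_space_lincomb[of f b g 1 "-1"] by simp_all

lemma zyg_space_add: "f \<in> zyg_space b \<Longrightarrow> g \<in> zyg_space b \<Longrightarrow> (\<lambda>z. f z + g z) \<in> zyg_space b"
  and zyg_norm_add_le: "f \<in> zyg_space b \<Longrightarrow> g \<in> zyg_space b \<Longrightarrow>
     zyg_norm b (\<lambda>z. f z + g z) \<le> zyg_norm b f + zyg_norm b g"
  using zyg_space_lincomb[of f b g 1 1] by simp_all

lemma zyg_space_scale: "f \<in> zyg_space b \<Longrightarrow> (\<lambda>z. c * f z) \<in> zyg_space b"
  and zyg_norm_scale_le: "f \<in> zyg_space b \<Longrightarrow> zyg_norm b (\<lambda>z. c * f z) \<le> cmod c * zyg_norm b f"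
  using zyg_space_lincomb[OF _ zyg_space_zero, of f b c 0] by (simp_all add: zyg_norm_zero)

lemma zyg_norm_tendsto_zeroI:
  assumes "\<And>n. h n \<in> zyg_space b" and "\<And>n. zyg_norm b (h n) \<le> e n" and "e \<longlonglongrightarrow> 0"
  shows "(\<lambda>n. zyg_norm b (h n)) \<longlonglongrightarrow> 0"
  by (rule tendsto_sandwich[OF _ _ tendsto_const \<open>e \<longlonglongrightarrow> 0\<close>])
     (use assms zyg_norm_nonneg in auto)

lemma bloch_space_const: "(\<lambda>z. c) \<in> bloch_space a"
  by (auto simp: bloch_space_def)

lemma bloch0_space_zero: "(\<lambda>z. 0) \<in> bloch0_space a"
  and bloch_norm_zero: "bloch_norm a (\<lambda>z. 0) = 0"
  using zero_in_disk
  by (auto simp: bloch_norm_def bloch_space_def bloch0_space_def intro!: cSUP_const)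

lemma bloch0_subset_bloch: "bloch0_space a \<subseteq> bloch_space a"
  by (auto simp: bloch0_space_def)

lemma norm_value0_le_bloch_norm:
  assumes "f \<in> bloch_space a"
  shows "cmod (f 0) \<le> bloch_norm a f"
proof -
  have "0 \<le> (1 - (cmod 0)^2) powr a * cmod (deriv f 0)" by simp
  also have "\<dots> \<le> (SUP z\<in>disk. (1 - (cmod z)^2) powr a * cmod (deriv f z))"
    using assms zero_in_disk by (intro cSUP_upper) (auto simp: bloch_space_def)
  finally show ?thesis unfolding bloch_norm_def by simp
qed

lemma bloch_norm_nonneg: "f \<in> bloch_space a \<Longrightarrow> 0 \<le> bloch_norm a f"
  by (meson norm_ge_zero norm_value0_le_bloch_norm order_trans)

lemma
  assumes f: "f \<in> bloch_space a"
  shows bloch0_space_shift: "(\<lambda>z. f z - f 0) \<in> bloch0_space a"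
    and bloch_norm_shift_le: "bloch_norm a (\<lambda>z. f z - f 0) \<le> bloch_norm a f"
proof -
  have hf: "f holomorphic_on disk" using f by (auto simp: bloch_space_def)
  have "deriv (\<lambda>z. f z - f 0) z = deriv f z" if "z \<in> disk" for z
    using higher_deriv_diff[OF hf _ open_disk that, of "\<lambda>_. f 0" 1] by simp
  then have weights_eq: "(\<lambda>z. (1 - (cmod z)^2) powr a * cmod (deriv (\<lambda>z. f z - f 0) z)) ` disk
      = (\<lambda>z. (1 - (cmod z)^2) powr a * cmod (deriv f z)) ` disk"
    by (intro image_cong) auto
  have "(\<lambda>z. f z - f 0) holomorphic_on disk" using hf by (intro holomorphic_intros)
  then show "(\<lambda>z. f z - f 0) \<in> bloch0_space a"
    using f weights_eq by (auto simp: bloch0_space_def bloch_space_def)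
  show "bloch_norm a (\<lambda>z. f z - f 0) \<le> bloch_norm a f"
    unfolding bloch_norm_def using weights_eq by simp
qed

lemma linear_on_shift: "linear_on X (\<lambda>f z. f z - f 0)"
  by (simp add: linear_on_def fun_eq_iff algebra_simps)

lemma linear_on_apply_shift:
  assumes "linear_on (bloch_space a) T" and "f \<in> bloch_space a"
  shows "T (\<lambda>z. f z - f 0) = (\<lambda>z. T f z - f 0 * T (\<lambda>_. 1) z)"
proof -
  have add: "T (\<lambda>z. f z + g z) = (\<lambda>z. T f z + T g z)" if "g \<in> bloch_space a" for g
    using assms that unfolding linear_on_def by blast
  have scale: "T (\<lambda>z. c * 1) = (\<lambda>z. c * T (\<lambda>_. 1) z)" for c
    using assms(1)[unfolded linear_on_def, THEN conjunct2, rule_format, OF bloch_space_const] .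
  have "T (\<lambda>z. f z - f 0) = (\<lambda>z. T f z + T (\<lambda>_. - f 0) z)"
    using add[OF bloch_space_const[of "- f 0"]] by simp
  then show ?thesis using scale[of "- f 0"] by simp
qed

lemma compact_opD:
  fixes s :: "nat \<Rightarrow> cfun"
  assumes "compact_op X nX Y nY K"
  shows "linear_on X K" and "f \<in> X \<Longrightarrow> K f \<in> Y"
    and "(\<And>n. s n \<in> X) \<Longrightarrow> bdd_above (range (\<lambda>n. nX (s n))) \<Longrightarrow>
      \<exists>r g. strict_mono r \<and> g \<in> Y \<and> (\<lambda>n. nY (\<lambda>z. K (s (r n)) z - g z)) \<longlonglongrightarrow> 0"
  using assms unfolding compact_op_def by blast+

lemma compact_op_zero: "compact_op X nX (zyg_space b) (zyg_norm b) (\<lambda>f z. 0)"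
  unfolding compact_op_def linear_on_def
  using strict_mono_id zyg_space_zero zyg_norm_zero by fastforce

lemma compact_op_bdd_above_unit_ball:
  assumes K: "compact_op X nX (zyg_space b) (zyg_norm b) K"
  shows "bdd_above {zyg_norm b (K f) | f. f \<in> X \<and> nX f \<le> 1}"
proof (rule ccontr)
  assume unbounded: "\<not> ?thesis"
  have "\<exists>f. f \<in> X \<and> nX f \<le> 1 \<and> zyg_norm b (K f) > real n" for n
  proof (rule ccontr)
    assume "\<not> ?thesis"
    then have "bdd_above {zyg_norm b (K f) | f. f \<in> X \<and> nX f \<le> 1}"
      by (intro bdd_aboveI[of _ "real n"]) (auto simp: not_less)
    with unbounded show False ..
  qed
  then obtain s where s: "\<And>n. s n \<in> X" "\<And>n. nX (s n) \<le> 1" "\<And>n. zyg_norm b (K (s n)) > real n"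
    by metis
  have KY: "K f \<in> zyg_space b" if "f \<in> X" for f using K that by (auto simp: compact_op_def)
  have "bdd_above (range (\<lambda>n. nX (s n)))" using s(2) by (intro bdd_aboveI[of _ 1]) auto
  then obtain r g where r: "strict_mono r" and g: "g \<in> zyg_space b"
    and lim: "(\<lambda>n. zyg_norm b (\<lambda>z. K (s (r n)) z - g z)) \<longlonglongrightarrow> 0"
    using K s(1) unfolding compact_op_def by blast
  from lim have "eventually (\<lambda>n. zyg_norm b (\<lambda>z. K (s (r n)) z - g z) < 1) sequentially"
    by (rule order_tendstoD) simp
  moreover have "eventually (\<lambda>n. real n > 1 + zyg_norm b g) sequentially"
    using filterlim_real_sequentially by (simp add: filterlim_at_top_dense)
  ultimately have "eventually (\<lambda>n. zyg_norm b (\<lambda>z. K (s (r n)) z - g z) < 1 \<and> real n > 1 + zyg_norm b g)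
      sequentially"
    by (rule eventually_conj)
  then obtain n where n: "zyg_norm b (\<lambda>z. K (s (r n)) z - g z) < 1" "real n > 1 + zyg_norm b g"
    by (auto simp: eventually_sequentially)
  have "K (s (r n)) = (\<lambda>z. (K (s (r n)) z - g z) + g z)" by simp
  then have "zyg_norm b (K (s (r n))) \<le> zyg_norm b (\<lambda>z. K (s (r n)) z - g z) + zyg_norm b g"
    using zyg_norm_add_le[OF zyg_space_diff[OF KY[OF s(1)] g] g] by simp
  also have "\<dots> < real n" using n by simp
  also have "\<dots> \<le> real (r n)" using seq_suble[OF r] by simp
  finally show False using s(3)[of "r n"] by simp
qed

lemma compact_op_comp:
  assumes K: "compact_op X0 nX Y nY K"
    and P: "linear_on X P" "\<And>f. f \<in> X \<Longrightarrow> P f \<in> X0" "\<And>f. f \<in> X \<Longrightarrow> nX (P f) \<le> nX f"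
  shows "compact_op X nX Y nY (\<lambda>f. K (P f))"
  unfolding compact_op_def
proof (intro conjI allI impI)
  note K_lin = compact_opD(1)[OF K]
  show "linear_on X (\<lambda>f. K (P f))"
    unfolding linear_on_def
  proof (intro conjI ballI allI)
    fix f g assume fg: "f \<in> X" "g \<in> X"
    then have "P (\<lambda>z. f z + g z) = (\<lambda>z. P f z + P g z)"
      using P(1) unfolding linear_on_def by blast
    then show "K (P (\<lambda>z. f z + g z)) = (\<lambda>z. K (P f) z + K (P g) z)"
      using K_lin P(2)[OF fg(1)] P(2)[OF fg(2)] unfolding linear_on_def by simp
  next
    fix c f assume f: "f \<in> X"
    then have "P (\<lambda>z. c * f z) = (\<lambda>z. c * P f z)"
      using P(1) unfolding linear_on_def by blast
    then show "K (P (\<lambda>z. c * f z)) = (\<lambda>z. c * K (P f) z)"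
      using K_lin P(2)[OF f] unfolding linear_on_def by simp
  qed
  show "\<forall>f\<in>X. K (P f) \<in> Y"
    using compact_opD(2)[OF K] P(2) by blast
  fix s :: "nat \<Rightarrow> cfun"
  assume s: "\<forall>n. s n \<in> X" and "bdd_above (range (\<lambda>n. nX (s n)))"
  then obtain M where M: "\<And>n. nX (s n) \<le> M" by (auto simp: bdd_above_def)
  have "nX (P (s n)) \<le> M" for n
    using P(3) s M by (meson order_trans)
  then have "bdd_above (range (\<lambda>n. nX (P (s n))))"
    by (intro bdd_aboveI[of _ M]) auto
  then show "\<exists>r g. strict_mono r \<and> g \<in> Y \<and> (\<lambda>n. nY (\<lambda>z. K (P (s (r n))) z - g z)) \<longlonglongrightarrow> 0"
    using compact_opD(3)[OF K, of "\<lambda>n. P (s n)"] P(2) s by blast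
qed

lemma linear_on_add:
  assumes "linear_on X K1" and "linear_on X K2"
  shows "linear_on X (\<lambda>f z. K1 f z + K2 f z)"
  unfolding linear_on_def
proof (intro conjI ballI allI)
  fix f g assume "f \<in> X" "g \<in> X"
  then show "(\<lambda>z. K1 (\<lambda>z. f z + g z) z + K2 (\<lambda>z. f z + g z) z) =
      (\<lambda>z. K1 f z + K2 f z + (K1 g z + K2 g z))"
    using assms unfolding linear_on_def by (simp add: algebra_simps)
next
  fix c f assume "f \<in> X"
  then show "(\<lambda>z. K1 (\<lambda>z. c * f z) z + K2 (\<lambda>z. c * f z) z) = (\<lambda>z. c * (K1 f z + K2 f z))"
    using assms unfolding linear_on_def by (simp add: algebra_simps)
qed

lemma compact_op_add:
  assumes K1: "compact_op X nX (zyg_space b) (zyg_norm b) K1"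
    and K2: "compact_op X nX (zyg_space b) (zyg_norm b) K2"
  shows "compact_op X nX (zyg_space b) (zyg_norm b) (\<lambda>f z. K1 f z + K2 f z)"
  unfolding compact_op_def
proof (intro conjI allI impI ballI)
  show "linear_on X (\<lambda>f z. K1 f z + K2 f z)"
    by (rule linear_on_add[OF compact_opD(1)[OF K1] compact_opD(1)[OF K2]])
  note KY = compact_opD(2)[OF K1] compact_opD(2)[OF K2]
  show "(\<lambda>z. K1 f z + K2 f z) \<in> zyg_space b" if "f \<in> X" for f
    using zyg_space_add[OF KY[OF that]] .
  fix s :: "nat \<Rightarrow> cfun"
  assume s: "\<forall>n. s n \<in> X" and bdd: "bdd_above (range (\<lambda>n. nX (s n)))"
  then obtain r1 g1 where r1: "strict_mono r1" and g1: "g1 \<in> zyg_space b"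
    and lim1: "(\<lambda>n. zyg_norm b (\<lambda>z. K1 (s (r1 n)) z - g1 z)) \<longlonglongrightarrow> 0"
    using compact_opD(3)[OF K1, of s] by blast
  have "bdd_above (range (\<lambda>n. nX (s (r1 n))))"
    by (rule bdd_above_mono[OF bdd]) auto
  then obtain r2 g2 where r2: "strict_mono r2" and g2: "g2 \<in> zyg_space b"
    and lim2: "(\<lambda>n. zyg_norm b (\<lambda>z. K2 (s (r1 (r2 n))) z - g2 z)) \<longlonglongrightarrow> 0"
    using compact_opD(3)[OF K2, of "\<lambda>n. s (r1 n)"] s by blast
  define D1 where "D1 n = (\<lambda>z. K1 (s (r1 (r2 n))) z - g1 z)" for n
  define D2 where "D2 n = (\<lambda>z. K2 (s (r1 (r2 n))) z - g2 z)" for n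
  have D: "D1 n \<in> zyg_space b" "D2 n \<in> zyg_space b" for n
    unfolding D1_def D2_def using KY s g1 g2 by (auto intro: zyg_space_diff)
  have "(\<lambda>n. zyg_norm b (\<lambda>z. D1 n z + D2 n z)) \<longlonglongrightarrow> 0"
  proof (rule zyg_norm_tendsto_zeroI)
    show "(\<lambda>z. D1 n z + D2 n z) \<in> zyg_space b" for n
      using zyg_space_add[OF D] .
    show "zyg_norm b (\<lambda>z. D1 n z + D2 n z) \<le> zyg_norm b (D1 n) + zyg_norm b (D2 n)" for n
      using zyg_norm_add_le[OF D] .
    have "(\<lambda>n. zyg_norm b (D1 n)) \<longlonglongrightarrow> 0"
      using LIMSEQ_subseq_LIMSEQ[OF lim1 r2] by (simp add: D1_def o_def)
    moreover have "(\<lambda>n. zyg_norm b (D2 n)) \<longlonglongrightarrow> 0"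
      using lim2 by (simp add: D2_def)
    ultimately show "(\<lambda>n. zyg_norm b (D1 n) + zyg_norm b (D2 n)) \<longlonglongrightarrow> 0"
      by (rule tendsto_add_zero)
  qed
  moreover have "(\<lambda>z. D1 n z + D2 n z) =
      (\<lambda>z. K1 (s (r1 (r2 n))) z + K2 (s (r1 (r2 n))) z - (g1 z + g2 z))" for n
    by (simp add: D1_def D2_def algebra_simps)
  moreover have "(\<lambda>z. g1 z + g2 z) \<in> zyg_space b"
    using zyg_space_add[OF g1 g2] .
  ultimately show "\<exists>r g. strict_mono r \<and> g \<in> zyg_space b \<and>
      (\<lambda>n. zyg_norm b (\<lambda>z. K1 (s (r n)) z + K2 (s (r n)) z - g z)) \<longlonglongrightarrow> 0"
    using strict_mono_o[OF r1 r2] by (intro exI[of _ "r1 \<circ> r2"] exI[of _ "\<lambda>z. g1 z + g2 z"]) simp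
qed

lemma compact_op_value0_times:
  assumes u: "u \<in> zyg_space b"
  shows "compact_op (bloch_space a) (bloch_norm a) (zyg_space b) (zyg_norm b) (\<lambda>f z. f 0 * u z)"
  unfolding compact_op_def
proof (intro conjI allI impI ballI)
  show "linear_on (bloch_space a) (\<lambda>f z. f 0 * u z)"
    by (simp add: linear_on_def algebra_simps)
  show "(\<lambda>z. f 0 * u z) \<in> zyg_space b" for f
    using zyg_space_scale[OF u] .
  fix s :: "nat \<Rightarrow> cfun"
  assume s: "\<forall>n. s n \<in> bloch_space a" and "bdd_above (range (\<lambda>n. bloch_norm a (s n)))"
  then obtain M where M: "\<And>n. bloch_norm a (s n) \<le> M" by (auto simp: bdd_above_def)
  have "cmod (s n 0) \<le> M" for n
    using norm_value0_le_bloch_norm[of "s n" a] s M by (meson order_trans)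
  then have "bounded (range (\<lambda>n. s n 0))"
    unfolding bounded_iff by blast
  then obtain r l where r: "strict_mono r" and lim: "((\<lambda>n. s n 0) \<circ> r) \<longlonglongrightarrow> l"
    using bounded_imp_convergent_subsequence by blast
  have "(\<lambda>n. zyg_norm b (\<lambda>z. (s (r n) 0 - l) * u z)) \<longlonglongrightarrow> 0"
  proof (rule zyg_norm_tendsto_zeroI)
    show "(\<lambda>z. (s (r n) 0 - l) * u z) \<in> zyg_space b" for n
      using zyg_space_scale[OF u] .
    show "zyg_norm b (\<lambda>z. (s (r n) 0 - l) * u z) \<le> cmod (s (r n) 0 - l) * zyg_norm b u" for n
      using zyg_norm_scale_le[OF u] .
    have "(\<lambda>n. s (r n) 0 - l) \<longlonglongrightarrow> 0" using lim by (simp add: o_def LIM_zero)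
    then show "(\<lambda>n. cmod (s (r n) 0 - l) * zyg_norm b u) \<longlonglongrightarrow> 0"
      by (intro tendsto_mult_left_zero tendsto_norm_zero)
  qed
  then show "\<exists>r g. strict_mono r \<and> g \<in> zyg_space b \<and>
      (\<lambda>n. zyg_norm b (\<lambda>z. s (r n) 0 * u z - g z)) \<longlonglongrightarrow> 0"
    using r zyg_space_scale[OF u, of l]
    by (intro exI[of _ r] exI[of _ "\<lambda>z. l * u z"]) (simp add: left_diff_distrib)
qed

definition bloch0_extension :: "cfun \<Rightarrow> (cfun \<Rightarrow> cfun) \<Rightarrow> cfun \<Rightarrow> cfun" where
  "bloch0_extension u K0 f = (\<lambda>z. K0 (\<lambda>w. f w - f 0) z + f 0 * u z)"

lemma compact_op_bloch0_extension:
  assumes u: "u \<in> zyg_space b"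
    and K0: "compact_op (bloch0_space a) (bloch_norm a) (zyg_space b) (zyg_norm b) K0"
  shows "compact_op (bloch_space a) (bloch_norm a) (zyg_space b) (zyg_norm b) (bloch0_extension u K0)"
proof -
  have "compact_op (bloch_space a) (bloch_norm a) (zyg_space b) (zyg_norm b) (\<lambda>f. K0 (\<lambda>w. f w - f 0))"
    using compact_op_comp[OF K0, of "bloch_space a" "\<lambda>f z. f z - f 0"]
    by (simp add: linear_on_shift bloch0_space_shift bloch_norm_shift_le)
  from compact_op_add[OF this compact_op_value0_times[OF u]] show ?thesis
    unfolding bloch0_extension_def[abs_def] .
qed

lemma bdd_above_norm_diff_compact:
  assumes T: "bounded_op (bloch_space a) (bloch_norm a) (zyg_space b) (zyg_norm b) T"
    and X: "X \<subseteq> bloch_space a"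
    and K: "compact_op X (bloch_norm a) (zyg_space b) (zyg_norm b) K"
  shows "bdd_above {zyg_norm b (\<lambda>z. T f z - K f z) | f. f \<in> X \<and> bloch_norm a f \<le> 1}"
proof -
  obtain C where C: "\<And>f. f \<in> bloch_space a \<Longrightarrow> zyg_norm b (T f) \<le> C * bloch_norm a f"
    using T by (auto simp: bounded_op_def)
  obtain M where M: "\<And>f. f \<in> X \<Longrightarrow> bloch_norm a f \<le> 1 \<Longrightarrow> zyg_norm b (K f) \<le> M"
    using compact_op_bdd_above_unit_ball[OF K] unfolding bdd_above_def by blast
  have "zyg_norm b (\<lambda>z. T f z - K f z) \<le> \<bar>C\<bar> + M" if f: "f \<in> X" "bloch_norm a f \<le> 1" for f
  proof -
    have fB: "f \<in> bloch_space a" using f(1) X by blast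
    have "zyg_norm b (\<lambda>z. T f z - K f z) \<le> zyg_norm b (T f) + zyg_norm b (K f)"
      using T fB compact_opD(2)[OF K f(1)] by (intro zyg_norm_diff_le) (auto simp: bounded_op_def)
    also have "\<dots> \<le> C * bloch_norm a f + M"
      using C[OF fB] M[OF f] by simp
    also have "C * bloch_norm a f \<le> \<bar>C\<bar> * 1"
      using bloch_norm_nonneg[OF fB] f(2) by (intro mult_mono) auto
    finally show ?thesis by simp
  qed
  then show ?thesis by (intro bdd_aboveI[of _ "\<bar>C\<bar> + M"]) auto
qed

lemma op_norm_diff_compact_nonneg:
  assumes T: "bounded_op (bloch_space a) (bloch_norm a) (zyg_space b) (zyg_norm b) T"
    and X: "X \<subseteq> bloch_space a" "(\<lambda>z. 0) \<in> X"
    and K: "compact_op X (bloch_norm a) (zyg_space b) (zyg_norm b) K"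
  shows "0 \<le> op_norm X (bloch_norm a) (zyg_norm b) (\<lambda>f z. T f z - K f z)"
proof -
  have "T (\<lambda>z. 0) = (\<lambda>z. 0)" "K (\<lambda>z. 0) = (\<lambda>z. 0)"
    using T X compact_opD(1)[OF K] by (auto simp: bounded_op_def intro: linear_on_zero)
  then have "0 \<in> {zyg_norm b (\<lambda>z. T f z - K f z) | f. f \<in> X \<and> bloch_norm a f \<le> 1}"
    using X(2) zyg_norm_zero bloch_norm_zero by (intro CollectI exI[of _ "\<lambda>z. 0"]) auto
  then show ?thesis
    unfolding op_norm_def using bdd_above_norm_diff_compact[OF T X(1) K] by (intro cSup_upper) auto
qed

lemma op_norm_diff_restrict_le:
  assumes T: "bounded_op (bloch_space a) (bloch_norm a) (zyg_space b) (zyg_norm b) T"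
    and K: "compact_op (bloch_space a) (bloch_norm a) (zyg_space b) (zyg_norm b) K"
  shows "op_norm (bloch0_space a) (bloch_norm a) (zyg_norm b) (\<lambda>f z. T f z - K f z)
       \<le> op_norm (bloch_space a) (bloch_norm a) (zyg_norm b) (\<lambda>f z. T f z - K f z)"
  unfolding op_norm_def
proof (rule cSup_subset_mono)
  show "{zyg_norm b (\<lambda>z. T f z - K f z) | f. f \<in> bloch0_space a \<and> bloch_norm a f \<le> 1} \<noteq> {}"
    using bloch0_space_zero bloch_norm_zero by fastforce
  show "bdd_above {zyg_norm b (\<lambda>z. T f z - K f z) | f. f \<in> bloch_space a \<and> bloch_norm a f \<le> 1}"
    by (rule bdd_above_norm_diff_compact[OF T order_refl K])
qed (use bloch0_subset_bloch in blast)

lemma op_norm_diff_bloch0_extension_le: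
  assumes T: "bounded_op (bloch_space a) (bloch_norm a) (zyg_space b) (zyg_norm b) T"
    and K0: "compact_op (bloch0_space a) (bloch_norm a) (zyg_space b) (zyg_norm b) K0"
  shows "op_norm (bloch_space a) (bloch_norm a) (zyg_norm b) (\<lambda>f z. T f z - bloch0_extension (T (\<lambda>_. 1)) K0 f z)
       \<le> op_norm (bloch0_space a) (bloch_norm a) (zyg_norm b) (\<lambda>f z. T f z - K0 f z)"
  unfolding op_norm_def
proof (rule cSup_subset_mono)
  show "{zyg_norm b (\<lambda>z. T f z - bloch0_extension (T (\<lambda>_. 1)) K0 f z) | f.
      f \<in> bloch_space a \<and> bloch_norm a f \<le> 1} \<noteq> {}"
    using bloch0_space_zero bloch0_subset_bloch bloch_norm_zero by fastforce
  show "bdd_above {zyg_norm b (\<lambda>z. T f z - K0 f z) | f. f \<in> bloch0_space a \<and> bloch_norm a f \<le> 1}"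
    by (rule bdd_above_norm_diff_compact[OF T bloch0_subset_bloch K0])
  have T_lin: "linear_on (bloch_space a) T" using T by (simp add: bounded_op_def)
  show "{zyg_norm b (\<lambda>z. T f z - bloch0_extension (T (\<lambda>_. 1)) K0 f z) | f.
      f \<in> bloch_space a \<and> bloch_norm a f \<le> 1}
    \<subseteq> {zyg_norm b (\<lambda>z. T f z - K0 f z) | f. f \<in> bloch0_space a \<and> bloch_norm a f \<le> 1}"
  proof safe
    fix f assume f: "f \<in> bloch_space a" "bloch_norm a f \<le> 1"
    define h where "h = (\<lambda>w. f w - f 0)"
    have "(\<lambda>z. T f z - bloch0_extension (T (\<lambda>_. 1)) K0 f z) = (\<lambda>z. T h z - K0 h z)"
      using linear_on_apply_shift[OF T_lin f(1)]
      by (simp add: h_def bloch0_extension_def fun_eq_iff algebra_simps)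
    moreover have "h \<in> bloch0_space a" "bloch_norm a h \<le> 1"
      using bloch0_space_shift[OF f(1)] bloch_norm_shift_le[OF f(1)] f(2) unfolding h_def by auto
    ultimately show "\<exists>h. zyg_norm b (\<lambda>z. T f z - bloch0_extension (T (\<lambda>_. 1)) K0 f z)
        = zyg_norm b (\<lambda>z. T h z - K0 h z) \<and> h \<in> bloch0_space a \<and> bloch_norm a h \<le> 1"
      by auto
  qed
qed

lemma ess_norm_bloch0_eq_ess_norm_bloch:
  assumes T: "bounded_op (bloch_space a) (bloch_norm a) (zyg_space b) (zyg_norm b) T"
  shows "ess_norm (bloch0_space a) (bloch_norm a) (zyg_space b) (zyg_norm b) T
       = ess_norm (bloch_space a) (bloch_norm a) (zyg_space b) (zyg_norm b) T"
proof -
  let ?A = "{op_norm (bloch0_space a) (bloch_norm a) (zyg_norm b) (\<lambda>f z. T f z - K f z) | K.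
      compact_op (bloch0_space a) (bloch_norm a) (zyg_space b) (zyg_norm b) K}"
  let ?B = "{op_norm (bloch_space a) (bloch_norm a) (zyg_norm b) (\<lambda>f z. T f z - K f z) | K.
      compact_op (bloch_space a) (bloch_norm a) (zyg_space b) (zyg_norm b) K}"
  have "?A \<noteq> {}" "?B \<noteq> {}"
    using compact_op_zero by blast+
  have "bdd_below ?A"
    using op_norm_diff_compact_nonneg[OF T bloch0_subset_bloch bloch0_space_zero]
    by (intro bdd_belowI[of _ 0]) blast
  have "bdd_below ?B"
    using op_norm_diff_compact_nonneg[OF T order_refl subsetD[OF bloch0_subset_bloch bloch0_space_zero]]
    by (intro bdd_belowI[of _ 0]) blast
  have "Inf ?A \<le> Inf ?B"
  proof (rule cInf_mono[OF \<open>?B \<noteq> {}\<close> \<open>bdd_below ?A\<close>])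
    fix x assume "x \<in> ?B"
    then obtain K where K: "compact_op (bloch_space a) (bloch_norm a) (zyg_space b) (zyg_norm b) K"
      and x: "x = op_norm (bloch_space a) (bloch_norm a) (zyg_norm b) (\<lambda>f z. T f z - K f z)" by blast
    have "compact_op (bloch0_space a) (bloch_norm a) (zyg_space b) (zyg_norm b) K"
      using compact_op_comp[OF K, of "bloch0_space a" "\<lambda>f. f"] bloch0_subset_bloch
      by (auto simp: linear_on_def)
    then show "\<exists>y\<in>?A. y \<le> x"
      using op_norm_diff_restrict_le[OF T K] unfolding x by blast
  qed
  moreover have "Inf ?B \<le> Inf ?A"
  proof (rule cInf_mono[OF \<open>?A \<noteq> {}\<close> \<open>bdd_below ?B\<close>])
    fix x assume "x \<in> ?A"
    then obtain K0 where K0: "compact_op (bloch0_space a) (bloch_norm a) (zyg_space b) (zyg_norm b) K0"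
      and x: "x = op_norm (bloch0_space a) (bloch_norm a) (zyg_norm b) (\<lambda>f z. T f z - K0 f z)" by blast
    have "T (\<lambda>_. 1) \<in> zyg_space b"
      using T bloch_space_const by (auto simp: bounded_op_def)
    then show "\<exists>y\<in>?B. y \<le> x"
      using compact_op_bloch0_extension[OF _ K0] op_norm_diff_bloch0_extension_le[OF T K0]
      unfolding x by blast
  qed
  ultimately show ?thesis
    unfolding ess_norm_def by (rule antisym)
qed

theorem lemma4p1:
  fixes \<alpha> \<beta> :: real and u \<phi> :: "complex \<Rightarrow> complex"
  assumes "0 < \<alpha>" and "0 < \<beta>"
    and "u holomorphic_on disk"
    and "\<phi> holomorphic_on disk" and "\<phi> ` disk \<subseteq> disk"
    and "bounded_op (bloch_space \<alpha>) (bloch_norm \<alpha>) (zyg_space \<beta>) (zyg_norm \<beta>) (wcomp u \<phi>)"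
  shows "ess_norm (bloch0_space \<alpha>) (bloch_norm \<alpha>) (zyg_space \<beta>) (zyg_norm \<beta>) (wcomp u \<phi>)
       = ess_norm (bloch_space \<alpha>) (bloch_norm \<alpha>) (zyg_space \<beta>) (zyg_norm \<beta>) (wcomp u \<phi>)"
  using ess_norm_bloch0_eq_ess_norm_bloch[OF assms(6)] .

end
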